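(* For every integer $F\ge 2$, $s(F,F,1)=\dfrac{F(F-1)}{2}$.
   Context: A placement delivery array $S$-PDA$(F,K,Z)$ is an $F\times K$ array $R=(r_{j,k})$, $1\le j\le F$, $1\le k\le K$, over a finite set $S$ such that: (1) each cell is either empty or contains an element of $S$; (2) each column contains exactly $Z$ empty cells; (3) each element of $S$ occurs at most once in each row and at most once in each column; (4) if two distinct nonempty cells satisfy $r_{j_1,k_1}=r_{j_2,k_2}=t\in S$, then the cells $r_{j_1,k_2}$ and $r_{j_2,k_1}$ are empty. For integers $F,K\ge1$, $0\le Z\le F$, define $s(F,K,Z)=\min\{|S| : \text{there exists an } S\text{-PDA}(F,K,Z)\}$. *)

theory Defs
  imports Main
begin

text \<open>An F x K array over S: rows 1..F, columns 1..K; cell (j,k) is None (empty) or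
 Some t with t in S. Entries outside the index range are irrelevant.\<close>

definition is_PDA :: "'a set \<Rightarrow> nat \<Rightarrow> nat \<Rightarrow> nat \<Rightarrow> (nat \<Rightarrow> nat \<Rightarrow> 'a option) \<Rightarrow> bool" where
  "is_PDA S F K Z R \<longleftrightarrow>
     (\<forall>j\<in>{1..F}. \<forall>k\<in>{1..K}. \<forall>t. R j k = Some t \<longrightarrow> t \<in> S) \<and>
     (\<forall>k\<in>{1..K}. card {j\<in>{1..F}. R j k = None} = Z) \<and>
     (\<forall>t\<in>S. \<forall>j\<in>{1..F}. \<forall>k1\<in>{1..K}. \<forall>k2\<in>{1..K}.
         R j k1 = Some t \<longrightarrow> R j k2 = Some t \<longrightarrow> k1 = k2) \<and>
     (\<forall>t\<in>S. \<forall>k\<in>{1..K}. \<forall>j1\<in>{1..F}. \<forall>j2\<in>{1..F}.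
         R j1 k = Some t \<longrightarrow> R j2 k = Some t \<longrightarrow> j1 = j2) \<and>
     (\<forall>t\<in>S. \<forall>j1\<in>{1..F}. \<forall>j2\<in>{1..F}. \<forall>k1\<in>{1..K}. \<forall>k2\<in>{1..K}.
         (j1, k1) \<noteq> (j2, k2) \<longrightarrow> R j1 k1 = Some t \<longrightarrow> R j2 k2 = Some t \<longrightarrow>
         R j1 k2 = None \<and> R j2 k1 = None)"

text \<open>s(F,K,Z): minimum size of a finite symbol set S admitting an S-PDA(F,K,Z).
 Symbol sets are taken as finite sets of naturals (any finite set can be relabelled).\<close>

definition s_PDA :: "nat \<Rightarrow> nat \<Rightarrow> nat \<Rightarrow> nat" where
  "s_PDA F K Z = (LEAST n. \<exists>(S::nat set) R. finite S \<and> card S = n \<and> is_PDA S F K Z R)"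

end

theory Submission
  imports Defs
begin

text \<open>
  In a PDA(F, K, Z) every column has F - Z filled cells, so there are K(F - Z) filled cells in all.
  If a symbol occurs in cell (j0, k0), then each further occurrence lies in its own row j and forces
  the cell (j, k0) to be empty; hence a symbol occurs at most Z + 1 times, and
  K(F - Z) \<le> (Z + 1)|S|. For K = F and Z = 1 this gives |S| \<ge> F(F-1)/2, and the bound is attained
  by writing the unordered pair {j, k} into the cells (j, k) and (k, j) and leaving the diagonal empty.
\<close>

lemma is_PDA_symbol_in:
  "is_PDA S F K Z R \<Longrightarrow> j \<in> {1..F} \<Longrightarrow> k \<in> {1..K} \<Longrightarrow> R j k = Some t \<Longrightarrow> t \<in> S"
  unfolding is_PDA_def by blast

lemma is_PDA_card_empty_column:
  "is_PDA S F K Z R \<Longrightarrow> k \<in> {1..K} \<Longrightarrow> card {j \<in> {1..F}. R j k = None} = Z"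
  unfolding is_PDA_def by blast

lemma is_PDA_row_unique:
  "is_PDA S F K Z R \<Longrightarrow> j \<in> {1..F} \<Longrightarrow> k1 \<in> {1..K} \<Longrightarrow> k2 \<in> {1..K} \<Longrightarrow>
    R j k1 = Some t \<Longrightarrow> R j k2 = Some t \<Longrightarrow> k1 = k2"
  unfolding is_PDA_def by (meson is_PDA_symbol_in)

lemma is_PDA_column_unique:
  "is_PDA S F K Z R \<Longrightarrow> k \<in> {1..K} \<Longrightarrow> j1 \<in> {1..F} \<Longrightarrow> j2 \<in> {1..F} \<Longrightarrow>
    R j1 k = Some t \<Longrightarrow> R j2 k = Some t \<Longrightarrow> j1 = j2"
  unfolding is_PDA_def by (meson is_PDA_symbol_in)

lemma is_PDA_cross_empty:
  "is_PDA S F K Z R \<Longrightarrow> j1 \<in> {1..F} \<Longrightarrow> j2 \<in> {1..F} \<Longrightarrow> k1 \<in> {1..K} \<Longrightarrow> k2 \<in> {1..K} \<Longrightarrow>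
    (j1, k1) \<noteq> (j2, k2) \<Longrightarrow> R j1 k1 = Some t \<Longrightarrow> R j2 k2 = Some t \<Longrightarrow> R j1 k2 = None"
  unfolding is_PDA_def by (meson is_PDA_symbol_in)

definition symbol_cells :: "nat \<Rightarrow> nat \<Rightarrow> (nat \<Rightarrow> nat \<Rightarrow> 'a option) \<Rightarrow> 'a \<Rightarrow> (nat \<times> nat) set" where
  "symbol_cells F K R t = {(j, k) \<in> {1..F} \<times> {1..K}. R j k = Some t}"

lemma card_symbol_cells_le:
  assumes pda: "is_PDA S F K Z R"
  shows "card (symbol_cells F K R t) \<le> Z + 1"
proof (cases "symbol_cells F K R t = {}")
  case False
  then obtain j0 k0 where c0: "(j0, k0) \<in> symbol_cells F K R t" by auto
  let ?others = "symbol_cells F K R t - {(j0, k0)}"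
  have "inj_on fst ?others"
  proof (rule inj_onI)
    fix c c' assume "c \<in> ?others" "c' \<in> ?others" "fst c = fst c'"
    then show "c = c'"
      using is_PDA_row_unique[OF pda] by (auto simp: symbol_cells_def)
  qed
  moreover have "fst ` ?others \<subseteq> {j \<in> {1..F}. R j k0 = None}"
  proof (rule image_subsetI)
    fix c assume c: "c \<in> ?others"
    obtain j k where [simp]: "c = (j, k)" by (cases c)
    show "fst c \<in> {j \<in> {1..F}. R j k0 = None}"
      using c c0 is_PDA_cross_empty[OF pda, of j j0 k k0 t] by (auto simp: symbol_cells_def)
  qed
  ultimately have "card ?others \<le> card {j \<in> {1..F}. R j k0 = None}"
    by (simp add: card_image[symmetric] card_mono)
  also have "\<dots> = Z"
    using c0 is_PDA_card_empty_column[OF pda] by (simp add: symbol_cells_def)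
  finally show ?thesis
    using c0 by (simp add: card_Diff_singleton_if split: if_splits)
qed simp

lemma card_filled_cells:
  assumes pda: "is_PDA S F K Z R"
  shows "card {(j, k) \<in> {1..F} \<times> {1..K}. R j k \<noteq> None} = K * (F - Z)"
proof -
  have column: "card {j \<in> {1..F}. R j k \<noteq> None} = F - Z" if "k \<in> {1..K}" for k
  proof -
    have "{j \<in> {1..F}. R j k \<noteq> None} = {1..F} - {j \<in> {1..F}. R j k = None}" by auto
    also have "card \<dots> = card {1..F} - card {j \<in> {1..F}. R j k = None}"
      by (rule card_Diff_subset) auto
    finally show ?thesis
      using is_PDA_card_empty_column[OF pda that] by simp
  qed
  have "{(j, k) \<in> {1..F} \<times> {1..K}. R j k \<noteq> None}
      = prod.swap ` (SIGMA k:{1..K}. {j \<in> {1..F}. R j k \<noteq> None})"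
    by force
  then have "card {(j, k) \<in> {1..F} \<times> {1..K}. R j k \<noteq> None}
      = (\<Sum>k\<in>{1..K}. card {j \<in> {1..F}. R j k \<noteq> None})"
    by (simp add: card_image)
  also have "\<dots> = K * (F - Z)"
    using column by simp
  finally show ?thesis .
qed

theorem PDA_card_lower_bound:
  assumes "finite S" and pda: "is_PDA S F K Z R"
  shows "K * (F - Z) \<le> (Z + 1) * card S"
proof -
  have "{(j, k) \<in> {1..F} \<times> {1..K}. R j k \<noteq> None} = (\<Union>t\<in>S. symbol_cells F K R t)"
    using is_PDA_symbol_in[OF pda] by (auto simp: symbol_cells_def)
  then have "K * (F - Z) = card (\<Union>t\<in>S. symbol_cells F K R t)"
    using card_filled_cells[OF pda] by simp
  also have "\<dots> \<le> (\<Sum>t\<in>S. card (symbol_cells F K R t))"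
    using \<open>finite S\<close> by (rule card_UN_le)
  also have "\<dots> \<le> (\<Sum>t\<in>S. Z + 1)"
    using card_symbol_cells_le[OF pda] by (rule sum_mono)
  also have "\<dots> = (Z + 1) * card S"
    by simp
  finally show ?thesis .
qed

lemma is_PDA_relabel:
  assumes pda: "is_PDA S F K Z R" and inj: "inj_on f S"
  shows "is_PDA (f ` S) F K Z (\<lambda>j k. map_option f (R j k))"
proof -
  have Some_iff: "map_option f (R j k) = Some (f s) \<longleftrightarrow> R j k = Some s"
    if "j \<in> {1..F}" "k \<in> {1..K}" "s \<in> S" for j k s
    using that is_PDA_symbol_in[OF pda] inj_onD[OF inj] by auto
  show ?thesis
    unfolding is_PDA_def ball_simps(9)
  proof (intro conjI ballI allI impI)
    fix j k t assume "j \<in> {1..F}" "k \<in> {1..K}" "map_option f (R j k) = Some t"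
    then show "t \<in> f ` S"
      using is_PDA_symbol_in[OF pda] by auto
  next
    fix k assume "k \<in> {1..K}"
    then show "card {j \<in> {1..F}. map_option f (R j k) = None} = Z"
      using is_PDA_card_empty_column[OF pda] by simp
  next
    fix s j k1 k2 assume "s \<in> S" "j \<in> {1..F}" "k1 \<in> {1..K}" "k2 \<in> {1..K}"
      "map_option f (R j k1) = Some (f s)" "map_option f (R j k2) = Some (f s)"
    then show "k1 = k2"
      using Some_iff is_PDA_row_unique[OF pda] by blast
  next
    fix s k j1 j2 assume "s \<in> S" "k \<in> {1..K}" "j1 \<in> {1..F}" "j2 \<in> {1..F}"
      "map_option f (R j1 k) = Some (f s)" "map_option f (R j2 k) = Some (f s)"
    then show "j1 = j2"
      using Some_iff is_PDA_column_unique[OF pda] by blast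
  next
    fix s j1 j2 k1 k2 assume "s \<in> S" "j1 \<in> {1..F}" "j2 \<in> {1..F}" "k1 \<in> {1..K}" "k2 \<in> {1..K}"
      "(j1, k1) \<noteq> (j2, k2)"
      "map_option f (R j1 k1) = Some (f s)" "map_option f (R j2 k2) = Some (f s)"
    then have "R j1 k2 = None" "R j2 k1 = None"
      using Some_iff is_PDA_cross_empty[OF pda] by (metis prod.inject)+
    then show "map_option f (R j1 k2) = None" "map_option f (R j2 k1) = None"
      by simp_all
  qed
qed

lemma exists_nat_PDA:
  fixes S :: "'a set"
  assumes "finite S" and "is_PDA S F K Z R"
  shows "\<exists>(S' :: nat set) R'. finite S' \<and> card S' = card S \<and> is_PDA S' F K Z R'"
proof -
  obtain f :: "'a \<Rightarrow> nat" where "inj_on f S"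
    using finite_imp_inj_to_nat_seg[OF \<open>finite S\<close>] by blast
  then show ?thesis
    using assms is_PDA_relabel by (metis card_image finite_imageI)
qed

lemma s_PDA_le_card:
  assumes "finite S" and "is_PDA S F K Z R"
  shows "s_PDA F K Z \<le> card S"
  unfolding s_PDA_def using exists_nat_PDA[OF assms] by (rule Least_le)

lemma s_PDA_attained:
  assumes "finite S" and "is_PDA S F K Z R"
  shows "\<exists>(S' :: nat set) R'. finite S' \<and> card S' = s_PDA F K Z \<and> is_PDA S' F K Z R'"
proof -
  have "\<exists>n. \<exists>(S' :: nat set) R'. finite S' \<and> card S' = n \<and> is_PDA S' F K Z R'"
    using exists_nat_PDA[OF assms] by blast
  then show ?thesis
    unfolding s_PDA_def by (rule LeastI_ex)
qed

text \<open>The existence of some PDA is needed only to make the LEAST in s_PDA attained.\<close>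

theorem s_PDA_lower_bound:
  assumes "finite S" and "is_PDA S F K Z R"
  shows "K * (F - Z) \<le> (Z + 1) * s_PDA F K Z"
  using s_PDA_attained[OF assms] PDA_card_lower_bound by metis

definition pair_array :: "nat \<Rightarrow> nat \<Rightarrow> nat set option" where
  "pair_array j k = (if j = k then None else Some {j, k})"

lemma is_PDA_pair_array: "is_PDA {A. A \<subseteq> {1..F} \<and> card A = 2} F F 1 pair_array"
  unfolding is_PDA_def
proof (intro conjI ballI allI impI)
  fix j k t assume "j \<in> {1..F}" "k \<in> {1..F}" "pair_array j k = Some t"
  then show "t \<in> {A. A \<subseteq> {1..F} \<and> card A = 2}"
    by (auto simp: pair_array_def split: if_splits)
next
  fix k :: nat assume "k \<in> {1..F}"
  then have "{j \<in> {1..F}. pair_array j k = None} = {k}"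
    by (auto simp: pair_array_def)
  then show "card {j \<in> {1..F}. pair_array j k = None} = 1"
    by simp
next
  fix t j k1 k2 assume "pair_array j k1 = Some t" "pair_array j k2 = Some t"
  then show "k1 = k2"
    by (auto simp: pair_array_def doubleton_eq_iff split: if_splits)
next
  fix t k j1 j2 assume "pair_array j1 k = Some t" "pair_array j2 k = Some t"
  then show "j1 = j2"
    by (auto simp: pair_array_def doubleton_eq_iff split: if_splits)
next
  fix t j1 j2 k1 k2 assume "(j1, k1) \<noteq> (j2, k2)"
    "pair_array j1 k1 = Some t" "pair_array j2 k2 = Some t"
  then have "j1 = k2 \<and> k1 = j2"
    by (auto simp: pair_array_def doubleton_eq_iff split: if_splits)
  then show "pair_array j1 k2 = None" "pair_array j2 k1 = None"
    by (simp_all add: pair_array_def)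
qed

lemma card_2_subsets: "card {A. A \<subseteq> {1..n} \<and> card A = 2} = n * (n - 1) div 2"
  using n_subsets[of "{1..n}" 2] by (simp add: choose_two)

theorem mainTheorem5:
  fixes F :: nat
  assumes "F \<ge> 2"
  shows "s_PDA F F 1 = F * (F - 1) div 2"
proof -
  let ?pairs = "{A. A \<subseteq> {1..F} \<and> card A = 2}"
  have fin: "finite ?pairs"
    by (rule finite_subset[of _ "Pow {1..F}"]) auto
  have "s_PDA F F 1 \<le> F * (F - 1) div 2"
    using s_PDA_le_card[OF fin is_PDA_pair_array] card_2_subsets by simp
  moreover have "F * (F - 1) \<le> 2 * s_PDA F F 1"
    using s_PDA_lower_bound[OF fin is_PDA_pair_array] by simp
  ultimately show ?thesis
    by linarith
qed

end
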